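(* Let $f\in L^2(\Omega)$ with $\int_\Omega f\ne0$, and let $u\in BV(\Omega;[0,1])$ be not identically equal to $1$. Let $S(u)\in H^1(\Omega)$ be the solution of $\int_\Omega a(u)\nabla S(u)\cdot\nabla v+\int_\Omega b(u)S(u)^3v=\int_\Omega fv$ for all $v\in H^1(\Omega)$. Then there exist a measurable $\Omega^*\subset\Omega$ with $|\Omega^*|\ne0$ and $Q>0$ such that $b(u)S(u)^2\ge Q$ a.e. in $\Omega^*$.
   Context: $\Omega\subset\mathbb{R}^2$ bounded Lipschitz domain, $0<k<1$, $a(u)=1-(1-k)u$, $b(u)=1-u$. *)

theory Defs
  imports "HOL-Analysis.Analysis"
begin

definition coef_a :: "real \<Rightarrow> real \<Rightarrow> real" where
  "coef_a k u = 1 - (1 - k) * u"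

definition coef_b :: "real \<Rightarrow> real" where
  "coef_b u = 1 - u"

definition lipschitz_domain :: "(real^2) set \<Rightarrow> bool" where
  "lipschitz_domain \<Omega> \<longleftrightarrow> open \<Omega> \<and> connected \<Omega> \<and> \<Omega> \<noteq> {} \<and>
     (\<forall>x\<in>frontier \<Omega>. \<exists>r>0. \<exists>R::real^2\<Rightarrow>real^2. \<exists>\<gamma>::real\<Rightarrow>real. \<exists>L.
        orthogonal_transformation R \<and> (\<forall>s t. \<bar>\<gamma> s - \<gamma> t\<bar> \<le> L * \<bar>s - t\<bar>) \<and>
        (\<forall>y\<in>ball x r. y \<in> \<Omega> \<longleftrightarrow> (R (y - x)) $ 2 < \<gamma> ((R (y - x)) $ 1)))"

definition bounded_lipschitz_domain :: "(real^2) set \<Rightarrow> bool" where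
  "bounded_lipschitz_domain \<Omega> \<longleftrightarrow> bounded \<Omega> \<and> lipschitz_domain \<Omega>"

definition pderiv :: "2 \<Rightarrow> (real^2 \<Rightarrow> 'b::real_normed_vector) \<Rightarrow> real^2 \<Rightarrow> 'b" where
  "pderiv i f x = frechet_derivative f (at x) (axis i 1)"

fun Ck :: "nat \<Rightarrow> (real^2 \<Rightarrow> 'b::real_normed_vector) \<Rightarrow> bool" where
  "Ck 0 f = continuous_on UNIV f"
| "Ck (Suc n) f = (f differentiable_on UNIV \<and> continuous_on UNIV f \<and>
                   (\<forall>i. Ck n (pderiv i f)))"

definition smooth :: "(real^2 \<Rightarrow> 'b::real_normed_vector) \<Rightarrow> bool" where
  "smooth f \<longleftrightarrow> (\<forall>n. Ck n f)"

definition compact_support_in :: "(real^2 \<Rightarrow> 'b::real_normed_vector) \<Rightarrow> (real^2) set \<Rightarrow> bool" where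
  "compact_support_in f \<Omega> \<longleftrightarrow> compact (closure {x. f x \<noteq> 0}) \<and> closure {x. f x \<noteq> 0} \<subseteq> \<Omega>"

definition test_fun :: "(real^2) set \<Rightarrow> (real^2 \<Rightarrow> real) \<Rightarrow> bool" where
  "test_fun \<Omega> \<phi> \<longleftrightarrow> smooth \<phi> \<and> compact_support_in \<phi> \<Omega>"

definition C1c_field :: "(real^2) set \<Rightarrow> (real^2 \<Rightarrow> real^2) \<Rightarrow> bool" where
  "C1c_field \<Omega> \<phi> \<longleftrightarrow> Ck 1 \<phi> \<and> compact_support_in \<phi> \<Omega>"

definition divergence :: "(real^2 \<Rightarrow> real^2) \<Rightarrow> real^2 \<Rightarrow> real" where
  "divergence \<phi> x = (\<Sum>i\<in>UNIV. pderiv i \<phi> x $ i)"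

definition L1 :: "(real^2) set \<Rightarrow> (real^2 \<Rightarrow> real) \<Rightarrow> bool" where
  "L1 \<Omega> f \<longleftrightarrow> integrable (lebesgue_on \<Omega>) f"

definition L2 :: "(real^2) set \<Rightarrow> (real^2 \<Rightarrow> 'b::euclidean_space) \<Rightarrow> bool" where
  "L2 \<Omega> f \<longleftrightarrow> f \<in> borel_measurable (lebesgue_on \<Omega>) \<and>
                integrable (lebesgue_on \<Omega>) (\<lambda>x. (norm (f x))\<^sup>2)"

definition is_weak_grad :: "(real^2) set \<Rightarrow> (real^2 \<Rightarrow> real) \<Rightarrow> (real^2 \<Rightarrow> real^2) \<Rightarrow> bool" where
  "is_weak_grad \<Omega> u g \<longleftrightarrow>
     (\<forall>\<phi>. test_fun \<Omega> \<phi> \<longrightarrow> (\<forall>i.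
        integrable (lebesgue_on \<Omega>) (\<lambda>x. u x * pderiv i \<phi> x) \<and>
        integrable (lebesgue_on \<Omega>) (\<lambda>x. g x $ i * \<phi> x) \<and>
        (\<integral>x. u x * pderiv i \<phi> x \<partial>lebesgue_on \<Omega>) = - (\<integral>x. g x $ i * \<phi> x \<partial>lebesgue_on \<Omega>)))"

definition H1 :: "(real^2) set \<Rightarrow> (real^2 \<Rightarrow> real) \<Rightarrow> bool" where
  "H1 \<Omega> u \<longleftrightarrow> L2 \<Omega> u \<and> (\<exists>g. is_weak_grad \<Omega> u g \<and> L2 \<Omega> g)"

text \<open>The (a.e. unique) weak gradient of an H^1 function.\<close>
definition wgrad :: "(real^2) set \<Rightarrow> (real^2 \<Rightarrow> real) \<Rightarrow> real^2 \<Rightarrow> real^2" where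
  "wgrad \<Omega> u = (SOME g. is_weak_grad \<Omega> u g \<and> L2 \<Omega> g)"

definition BV01 :: "(real^2) set \<Rightarrow> (real^2 \<Rightarrow> real) \<Rightarrow> bool" where
  "BV01 \<Omega> u \<longleftrightarrow> L1 \<Omega> u \<and> (AE x in lebesgue_on \<Omega>. 0 \<le> u x \<and> u x \<le> 1) \<and>
     (\<exists>M. \<forall>\<phi>. C1c_field \<Omega> \<phi> \<and> (\<forall>x. norm (\<phi> x) \<le> 1) \<longrightarrow>
        (\<integral>x. u x * divergence \<phi> x \<partial>lebesgue_on \<Omega>) \<le> M)"

end

theory Submission
  imports Defs
begin

text \<open>If \<open>b(u) S\<^sup>2\<close> were not bounded below by a positive constant on any set of positive measure,
  it would be \<open>\<le> 0\<close> almost everywhere; as \<open>b(u) \<ge> 0\<close>, the term \<open>b(u) S\<^sup>3\<close> would vanish.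
  Testing the weak equation with \<open>v = 1\<close>, whose weak gradient vanishes almost everywhere by the
  fundamental lemma of the calculus of variations (proved with products of the smooth
  functions \<open>e\<^sup>-\<^sup>c\<^sup>/\<^sup>s\<close> as test functions on boxes), would then give \<open>\<integral>\<^sub>\<Omega> f = 0\<close>.\<close>

section \<open>Smooth functions with a flat zero\<close>

fun has_real_derivatives :: "nat \<Rightarrow> (real \<Rightarrow> real) \<Rightarrow> bool" where
  "has_real_derivatives 0 f = True"
| "has_real_derivatives (Suc n) f =
     (\<exists>f'. (\<forall>t. (f has_real_derivative f' t) (at t)) \<and> has_real_derivatives n f')"

lemma has_real_derivatives_add:
  "has_real_derivatives n f \<Longrightarrow> has_real_derivatives n g \<Longrightarrow> has_real_derivatives n (\<lambda>t. f t + g t)"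
proof (induction n arbitrary: f g)
  case (Suc n)
  then obtain f' g' where "\<forall>t. (f has_real_derivative f' t) (at t)" "has_real_derivatives n f'"
     "\<forall>t. (g has_real_derivative g' t) (at t)" "has_real_derivatives n g'" by auto
  with Suc.IH show ?case by (auto intro!: exI[of _ "\<lambda>t. f' t + g' t"] derivative_eq_intros)
qed simp

lemma has_real_derivatives_cmult:
  "has_real_derivatives n f \<Longrightarrow> has_real_derivatives n (\<lambda>t. c * f t)"
proof (induction n arbitrary: f)
  case (Suc n)
  then obtain f' where "\<forall>t. (f has_real_derivative f' t) (at t)" "has_real_derivatives n f'" by auto
  with Suc.IH show ?case by (auto intro!: exI[of _ "\<lambda>t. c * f' t"] derivative_eq_intros)
qed simp

text \<open>The parameter \<open>k\<close> closes the family under differentiation; this gives smoothness of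
  \<open>flat_exp c 0\<close> across \<open>0\<close>.\<close>

definition flat_exp :: "real \<Rightarrow> nat \<Rightarrow> real \<Rightarrow> real" where
  "flat_exp c k s = (if s > 0 then (1/s)^k * exp (-c/s) else 0)"

lemma flat_exp_nonneg: "0 \<le> flat_exp c k s"
  by (simp add: flat_exp_def)

lemma flat_exp_0_le_1: "c \<ge> 0 \<Longrightarrow> flat_exp c 0 s \<le> 1"
  by (simp add: flat_exp_def)

lemma flat_exp_0_neq_0_iff: "flat_exp c 0 s \<noteq> 0 \<longleftrightarrow> s > 0"
  by (simp add: flat_exp_def)

lemma tendsto_flat_exp_at_right_0:
  fixes c :: real
  assumes "c > 0"
  shows "((\<lambda>s. (1/s)^k * exp (-c/s)) \<longlongrightarrow> 0) (at_right 0)"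
proof -
  have "((\<lambda>x. (1/c)^k * (x ^ k / exp x)) \<longlongrightarrow> (1/c)^k * 0) at_top"
    by (rule tendsto_mult[OF tendsto_const tendsto_power_div_exp_0])
  then have "((\<lambda>x. (x/c)^k * exp (-x)) \<longlongrightarrow> 0) at_top"
    by (simp add: power_divide exp_minus field_simps)
  moreover have "filterlim (\<lambda>s. c / s) at_top (at_right 0)"
    using filterlim_tendsto_pos_mult_at_top[OF tendsto_const assms filterlim_inverse_at_top_right]
    by (simp add: divide_inverse)
  ultimately have "((\<lambda>s. ((c/s)/c)^k * exp (-(c/s))) \<longlongrightarrow> 0) (at_right 0)"
    by (rule filterlim_compose)
  moreover have "eventually (\<lambda>s. ((c/s)/c)^k * exp (-(c/s)) = (1/s)^k * exp (-c/s)) (at_right 0)"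
    unfolding eventually_at_right_field using assms by (intro exI[of _ 1]) (auto simp: field_simps)
  ultimately show ?thesis by (rule Lim_transform_eventually)
qed

lemma has_real_derivative_flat_exp_at_0:
  assumes "c > 0"
  shows "(flat_exp c k has_real_derivative 0) (at 0)"
  unfolding has_field_derivative_iff
proof (rule filterlim_split_at)
  have "eventually (\<lambda>y. 0 = (flat_exp c k y - flat_exp c k 0) / (y - 0)) (at_left (0::real))"
    unfolding eventually_at_left_field by (intro exI[of _ "-1"]) (auto simp: flat_exp_def)
  then show "((\<lambda>y. (flat_exp c k y - flat_exp c k 0) / (y - 0)) \<longlongrightarrow> 0) (at_left 0)"
    by (rule Lim_transform_eventually[OF tendsto_const])
next
  have "eventually (\<lambda>y. (1/y)^Suc k * exp (-c/y) = (flat_exp c k y - flat_exp c k 0) / (y - 0))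
      (at_right (0::real))"
    unfolding eventually_at_right_field by (intro exI[of _ 1]) (auto simp: flat_exp_def field_simps)
  then show "((\<lambda>y. (flat_exp c k y - flat_exp c k 0) / (y - 0)) \<longlongrightarrow> 0) (at_right 0)"
    by (rule Lim_transform_eventually[OF tendsto_flat_exp_at_right_0[OF assms]])
qed

lemma has_real_derivative_flat_exp:
  assumes "c > 0"
  shows "(flat_exp c k has_real_derivative
            (- real k * flat_exp c (Suc k) s + c * flat_exp c (Suc (Suc k)) s)) (at s)"
proof (cases s "0::real" rule: linorder_cases)
  case less
  have "((\<lambda>t. 0) has_real_derivative 0) (at s)" by simp
  then have "(flat_exp c k has_real_derivative 0) (at s)"
    by (rule has_field_derivative_transform_within_open[of _ _ _ "{..<0}"])
      (use less in \<open>auto simp: flat_exp_def\<close>)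
  then show ?thesis using less by (simp add: flat_exp_def)
next
  case equal
  then show ?thesis using has_real_derivative_flat_exp_at_0[OF assms] by (simp add: flat_exp_def)
next
  case greater
  have "((\<lambda>t. (1/t)^k * exp (-c/t)) has_real_derivative
      (- real k * flat_exp c (Suc k) s + c * flat_exp c (Suc (Suc k)) s)) (at s)"
    using greater power_minus_mult[of k s] power_minus_mult[of "k - 1" s]
    by (cases "k = 0 \<or> k = 1")
      (auto intro!: derivative_eq_intros simp: mult.commute flat_exp_def field_simps power2_eq_square)
  then show ?thesis
    by (rule has_field_derivative_transform_within_open[of _ _ _ "{0<..}"])
      (use greater in \<open>auto simp: flat_exp_def\<close>)
qed

lemma has_real_derivatives_flat_exp: "c > 0 \<Longrightarrow> has_real_derivatives n (flat_exp c k)"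
proof (induction n arbitrary: k)
  case (Suc n)
  then show ?case
    using has_real_derivative_flat_exp[OF Suc.prems]
    by (auto intro!: exI[of _ "\<lambda>s. - real k * flat_exp c (Suc k) s + c * flat_exp c (Suc (Suc k)) s"]
        has_real_derivatives_add has_real_derivatives_cmult Suc.IH)
qed simp

lemma pderiv_eqI: "(f has_derivative f') (at x) \<Longrightarrow> pderiv i f x = f' (axis i 1)"
  unfolding pderiv_def by (metis frechet_derivative_at)

lemma has_derivative_frechet_derivative_UNIV:
  "f differentiable_on UNIV \<Longrightarrow> (f has_derivative frechet_derivative f (at x)) (at x)"
  by (simp add: differentiable_on_def frechet_derivative_works)

lemma Ck_SucD: "Ck (Suc n) f \<Longrightarrow> Ck n f"
  by (induction n arbitrary: f) auto

lemma Ck_const: "Ck n (\<lambda>x. c)"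
proof (induction n arbitrary: c)
  case (Suc n)
  have "pderiv i (\<lambda>x. c) = (\<lambda>x. 0)" for i
    by (rule ext, rule pderiv_eqI[of _ "\<lambda>h. 0", simplified]) (rule has_derivative_const)
  with Suc.IH show ?case by simp
qed simp

lemma Ck_add: "Ck n f \<Longrightarrow> Ck n g \<Longrightarrow> Ck n (\<lambda>x. f x + g x)"
proof (induction n arbitrary: f g)
  case (Suc n)
  then have df: "f differentiable_on UNIV" and dg: "g differentiable_on UNIV" by auto
  have "pderiv i (\<lambda>x. f x + g x) = (\<lambda>x. pderiv i f x + pderiv i g x)" for i
  proof
    fix x
    show "pderiv i (\<lambda>x. f x + g x) x = pderiv i f x + pderiv i g x"
      using pderiv_eqI[OF has_derivative_add[OF has_derivative_frechet_derivative_UNIV[OF df, of x]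
            has_derivative_frechet_derivative_UNIV[OF dg, of x]], of i]
      by (simp add: pderiv_def)
  qed
  with Suc show ?case by (auto intro: differentiable_on_add continuous_on_add)
qed (auto intro: continuous_on_add)

lemma Ck_mult: "Ck n f \<Longrightarrow> Ck n g \<Longrightarrow> Ck n (\<lambda>x. f x * (g x :: real))"
proof (induction n arbitrary: f g)
  case (Suc n)
  then have df: "f differentiable_on UNIV" and dg: "g differentiable_on UNIV" by auto
  have "pderiv i (\<lambda>x. f x * g x) = (\<lambda>x. pderiv i f x * g x + f x * pderiv i g x)" for i
  proof
    fix x
    show "pderiv i (\<lambda>x. f x * g x) x = pderiv i f x * g x + f x * pderiv i g x"
      using pderiv_eqI[OF has_derivative_mult[OF has_derivative_frechet_derivative_UNIV[OF df, of x]
            has_derivative_frechet_derivative_UNIV[OF dg, of x]], of i]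
      by (simp add: pderiv_def)
  qed
  moreover have "Ck n (\<lambda>x. pderiv i f x * g x + f x * pderiv i g x)" for i
    using Suc by (intro Ck_add Suc.IH) (auto intro: Ck_SucD)
  ultimately show ?case
    using Suc.prems by (auto intro: differentiable_on_mult continuous_on_mult)
qed (auto intro: continuous_on_mult)

lemma Ck_comp_affine_coordinate:
  "has_real_derivatives (Suc n) h \<Longrightarrow> Ck n (\<lambda>x::real^2. h (s * x $ j + r))"
proof (induction n arbitrary: h)
  have "((\<lambda>x::real^2. x $ j) has_derivative (\<lambda>v. v $ j)) (at x)" for x
    by (rule bounded_linear_imp_has_derivative) (rule bounded_linear_vec_nth)
  then have affine: "((\<lambda>x::real^2. s * x $ j + r) has_derivative (\<lambda>v. s * v $ j)) (at x)" for x
    by (auto intro!: derivative_eq_intros)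
  have chain: "((\<lambda>x::real^2. h (s * x $ j + r)) has_derivative (\<lambda>v. h' (s * x $ j + r) * (s * v $ j))) (at x)"
    if "\<And>t. (h has_real_derivative h' t) (at t)" for x h h'
    using has_derivative_compose[OF affine that[of "s * x $ j + r", unfolded has_field_derivative_def]]
    by simp
  then have cont: "continuous_on UNIV (\<lambda>x::real^2. h (s * x $ j + r))"
    if "\<And>t. (h has_real_derivative h' t) (at t)" for h h'
    using that by (intro continuous_at_imp_continuous_on) (blast intro: has_derivative_continuous)
  {
    case 0
    then show ?case using cont by auto
  next
    case (Suc n)
    then obtain h' where h': "\<And>t. (h has_real_derivative h' t) (at t)" "has_real_derivatives (Suc n) h'"
      by auto
    have "pderiv i (\<lambda>x::real^2. h (s * x $ j + r)) = (\<lambda>x. (if i = j then s else 0) * h' (s * x $ j + r))" for i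
      by (rule ext, subst pderiv_eqI[OF chain[OF h'(1)]]) (simp add: axis_def)
    moreover have "Ck n (\<lambda>x::real^2. (if i = j then s else 0) * h' (s * x $ j + r))" for i
      by (intro Ck_mult Ck_const Suc.IH h')
    ultimately show ?case using chain[OF h'(1)] cont[OF h'(1)]
      by (auto simp: differentiable_on_def differentiable_def)
  }
qed

section \<open>Bump functions on boxes\<close>

definition box_bump :: "real \<Rightarrow> real^2 \<Rightarrow> real^2 \<Rightarrow> real^2 \<Rightarrow> real" where
  "box_bump c a b x = flat_exp c 0 (x$1 - a$1) * flat_exp c 0 (b$1 - x$1) *
                      flat_exp c 0 (x$2 - a$2) * flat_exp c 0 (b$2 - x$2)"

lemma Ck_box_bump: "c > 0 \<Longrightarrow> Ck n (box_bump c a b)"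
proof -
  assume "c > 0"
  then have "has_real_derivatives (Suc n) (flat_exp c 0)"
    by (rule has_real_derivatives_flat_exp)
  then have "Ck n (\<lambda>x::real^2. flat_exp c 0 (1 * x $ 1 + (- a $ 1)) * flat_exp c 0 ((-1) * x $ 1 + b $ 1)
       * flat_exp c 0 (1 * x $ 2 + (- a $ 2)) * flat_exp c 0 ((-1) * x $ 2 + b $ 2))"
    by (intro Ck_mult Ck_comp_affine_coordinate)
  then show ?thesis unfolding box_bump_def[abs_def] by simp
qed

lemma box_bump_neq_0_iff: "box_bump c a b x \<noteq> 0 \<longleftrightarrow> x \<in> box a b"
  unfolding box_bump_def mem_box_cart forall_2 using flat_exp_0_neq_0_iff by auto

lemma test_fun_box_bump:
  assumes "c > 0" and "closure (box a b) \<subseteq> \<Omega>"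
  shows "test_fun \<Omega> (box_bump c a b)"
  unfolding test_fun_def compact_support_in_def smooth_def
  using assms Ck_box_bump
  by (auto intro!: compact_closure[THEN iffD2] bounded_subset[OF bounded_cbox]
      simp: box_bump_neq_0_iff box_subset_cbox)

lemma box_bump_nonneg: "0 \<le> box_bump c a b x"
  by (simp add: box_bump_def flat_exp_nonneg)

lemma box_bump_le_1: "c \<ge> 0 \<Longrightarrow> box_bump c a b x \<le> 1"
  unfolding box_bump_def using flat_exp_nonneg flat_exp_0_le_1
  by (meson mult_le_one mult_nonneg_nonneg)

lemma box_bump_tendsto_indicator:
  "(\<lambda>n. box_bump (1 / Suc n) a b x) \<longlonglongrightarrow> indicator (box a b) x"
proof (cases "x \<in> box a b")
  case True
  have "(\<lambda>n. flat_exp (1 / Suc n) 0 s) \<longlonglongrightarrow> 1" if "s > 0" for s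
  proof -
    have "(\<lambda>n. exp (- (1 / real (Suc n)) / s)) \<longlonglongrightarrow> exp (- 0 / s)"
      by (intro tendsto_intros LIMSEQ_Suc lim_const_over_n) (use that in auto)
    then show ?thesis using that by (simp add: flat_exp_def)
  qed
  moreover have "x$1 - a$1 > 0" "b$1 - x$1 > 0" "x$2 - a$2 > 0" "b$2 - x$2 > 0"
    using True by (auto simp: mem_box_cart)
  ultimately have "(\<lambda>n. box_bump (1 / Suc n) a b x) \<longlonglongrightarrow> 1 * 1 * 1 * 1"
    unfolding box_bump_def by (intro tendsto_mult)
  then show ?thesis using True by simp
next
  case False
  then have "box_bump (1 / Suc n) a b x = 0" for n
    using box_bump_neq_0_iff by blast
  with False show ?thesis by simp
qed

section \<open>Integrals of partial derivatives of test functions\<close>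

lemma test_fun_C1:
  assumes "test_fun \<Omega> \<phi>"
  shows "\<phi> differentiable_on UNIV" and "continuous_on UNIV \<phi>" and "continuous_on UNIV (pderiv i \<phi>)"
proof -
  have "Ck (Suc 0) \<phi>" using assms unfolding test_fun_def smooth_def by blast
  then show "\<phi> differentiable_on UNIV" "continuous_on UNIV \<phi>" "continuous_on UNIV (pderiv i \<phi>)"
    by auto
qed

lemma pderiv_eq_0_outside:
  assumes "\<phi> differentiable_on UNIV" "closed K" "\<And>y. y \<notin> K \<Longrightarrow> \<phi> y = 0" "x \<notin> K"
  shows "pderiv i \<phi> x = 0"
proof -
  have "(\<phi> has_derivative (\<lambda>h. 0)) (at x)"
    by (rule has_derivative_transform_within_open[of "\<lambda>x. 0" _ _ _ "- K"]) (use assms in auto)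
  then show ?thesis by (simp add: pderiv_eqI)
qed

lemma has_real_derivative_pderiv_along_axis:
  assumes "\<phi> differentiable_on UNIV"
  shows "((\<lambda>t. \<phi> (x + t *\<^sub>R axis i 1)) has_real_derivative pderiv i \<phi> (x + t *\<^sub>R axis i 1)) (at t)"
proof -
  let ?e = "axis i (1::real) :: real^2"
  let ?D = "frechet_derivative \<phi> (at (x + t *\<^sub>R ?e))"
  have D: "(\<phi> has_derivative ?D) (at (x + t *\<^sub>R ?e))"
    by (rule has_derivative_frechet_derivative_UNIV[OF assms])
  have "((\<lambda>t. x + t *\<^sub>R ?e) has_derivative (\<lambda>s. s *\<^sub>R ?e)) (at t)"
    by (auto intro!: derivative_eq_intros)
  from has_derivative_compose[OF this D]
  have "((\<lambda>t. \<phi> (x + t *\<^sub>R ?e)) has_derivative (\<lambda>s. ?D (s *\<^sub>R ?e))) (at t)" .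
  moreover have "?D (s *\<^sub>R ?e) = pderiv i \<phi> (x + t *\<^sub>R ?e) * s" for s
    using linear_cmul[OF has_derivative_linear[OF D], of s ?e] by (simp add: pderiv_def)
  ultimately show ?thesis unfolding has_field_derivative_def by (simp add: mult_commute_abs)
qed

lemma integrable_lborel_compact_support:
  fixes f :: "'a::euclidean_space \<Rightarrow> real"
  assumes "continuous_on UNIV f" "compact K" "\<And>x. x \<notin> K \<Longrightarrow> f x = 0"
  shows "integrable lborel f"
proof -
  have "integrable lborel (\<lambda>x. indicator K x *\<^sub>R f x)"
    by (rule borel_integrable_compact[OF assms(2) continuous_on_subset[OF assms(1)]]) simp
  moreover have "(\<lambda>x. indicator K x *\<^sub>R f x) = f"
  proof
    fix x show "indicator K x *\<^sub>R f x = f x" using assms(3)[of x] by (cases "x \<in> K") auto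
  qed
  ultimately show ?thesis by simp
qed

lemma lborel_integral_translate:
  fixes f :: "'a::euclidean_space \<Rightarrow> real"
  assumes "integrable lborel f"
  shows "integrable lborel (\<lambda>x. f (c + x))" and "(\<integral>x. f (c + x) \<partial>lborel) = (\<integral>x. f x \<partial>lborel)"
proof -
  have plus: "(+) c \<in> measurable lborel borel" by simp
  have f: "f \<in> borel_measurable borel"
    using borel_measurable_integrable[OF assms] by simp
  from integrable_distr_eq[OF plus f] assms show "integrable lborel (\<lambda>x. f (c + x))"
    by (simp add: lborel_distr_plus)
  have "(\<integral>x. f x \<partial>lborel) = (\<integral>x. f x \<partial>distr lborel borel ((+) c))"
    by (simp add: lborel_distr_plus)
  also have "\<dots> = (\<integral>x. f (c + x) \<partial>lborel)"
    by (rule integral_distr[OF plus f])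
  finally show "(\<integral>x. f (c + x) \<partial>lborel) = (\<integral>x. f x \<partial>lborel)" ..
qed

lemma difference_quotient_bound:
  fixes g :: "real \<Rightarrow> real"
  assumes "\<And>t. (g has_real_derivative g' t) (at t)" "\<And>t. \<bar>g' t\<bar> \<le> M" "h > 0"
  shows "\<bar>(g h - g 0) / h\<bar> \<le> M"
proof -
  obtain z where "g h - g 0 = (h - 0) * g' z"
    using MVT2[OF assms(3) assms(1)] by blast
  then show ?thesis using assms(2)[of z] \<open>h > 0\<close> by simp
qed

lemma lborel_integral_difference_quotient_tendsto:
  fixes \<phi> p :: "'a::euclidean_space \<Rightarrow> real"
  assumes line: "\<And>x t. ((\<lambda>t. \<phi> (x + t *\<^sub>R e)) has_real_derivative p (x + t *\<^sub>R e)) (at t)"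
    and cont: "continuous_on UNIV \<phi>" "continuous_on UNIV p" and M: "\<And>x. \<bar>p x\<bar> \<le> M"
    and K: "compact K" and vanish: "\<And>x. x \<notin> K \<Longrightarrow> \<phi> x = 0" and e: "norm e \<le> 1"
    and h: "filterlim h (at 0) sequentially" "\<And>n. 0 < h n" "\<And>n. h n \<le> 1"
  shows "(\<lambda>n. \<integral>x. (\<phi> (x + h n *\<^sub>R e) - \<phi> x) / h n \<partial>lborel) \<longlonglongrightarrow> (\<integral>x. p x \<partial>lborel)"
proof -
  obtain R where R: "\<And>x. x \<in> K \<Longrightarrow> norm x \<le> R"
    using compact_imp_bounded[OF K] unfolding bounded_iff by blast
  show ?thesis
  proof (rule integral_dominated_convergence[where w="\<lambda>x. indicator (cball 0 (R + 1)) x *\<^sub>R M"])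
    show "integrable lborel (\<lambda>x. indicator (cball 0 (R + 1)) x *\<^sub>R M)"
      by (rule borel_integrable_compact) auto
    show "(\<lambda>x. (\<phi> (x + h n *\<^sub>R e) - \<phi> x) / h n) \<in> borel_measurable lborel" for n
      using borel_measurable_continuous_onI[OF cont(1)] by measurable
    show "p \<in> borel_measurable lborel"
      using borel_measurable_continuous_onI[OF cont(2)] by simp
    have "((\<lambda>t. (\<phi> (x + t *\<^sub>R e) - \<phi> x) / t) \<longlongrightarrow> p x) (at 0)" for x
      using line[of x 0] by (simp add: has_field_derivative_iff)
    then show "AE x in lborel. (\<lambda>n. (\<phi> (x + h n *\<^sub>R e) - \<phi> x) / h n) \<longlonglongrightarrow> p x"
      by (intro AE_I2) (rule filterlim_compose[OF _ h(1)])
    show "AE x in lborel. norm ((\<phi> (x + h n *\<^sub>R e) - \<phi> x) / h n) \<le> indicator (cball 0 (R + 1)) x *\<^sub>R M"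
      for n
    proof (intro AE_I2)
      fix x
      show "norm ((\<phi> (x + h n *\<^sub>R e) - \<phi> x) / h n) \<le> indicator (cball 0 (R + 1)) x *\<^sub>R M"
      proof (cases "x \<in> cball 0 (R + 1)")
        case True
        then show ?thesis using difference_quotient_bound[OF line M h(2)] by simp
      next
        case False
        have "norm x \<le> norm (x + h n *\<^sub>R e) + h n * norm e"
          using norm_triangle_ineq4[of "x + h n *\<^sub>R e" "h n *\<^sub>R e"] h(2)[of n] by simp
        also have "\<dots> \<le> norm (x + h n *\<^sub>R e) + 1"
          using e h(2,3)[of n] mult_le_one[of "h n" "norm e"] by simp
        finally have "x \<notin> K" "x + h n *\<^sub>R e \<notin> K"
          using False R by fastforce+
        then show ?thesis using False by (simp add: vanish)
      qed
    qed
  qed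
qed

text \<open>The integral of a difference quotient of \<open>\<phi>\<close> vanishes by translation invariance.\<close>

lemma lborel_integral_pderiv_eq_0:
  fixes \<phi> :: "real^2 \<Rightarrow> real"
  assumes diff: "\<phi> differentiable_on UNIV" and cont: "continuous_on UNIV \<phi>"
    and cont': "continuous_on UNIV (pderiv i \<phi>)"
    and K: "compact K" and vanish: "\<And>x. x \<notin> K \<Longrightarrow> \<phi> x = 0"
  shows "(\<integral>x. pderiv i \<phi> x \<partial>lborel) = 0"
proof -
  define h where "h n = 1 / real (Suc n)" for n
  have p0: "pderiv i \<phi> x = 0" if "x \<notin> K" for x
    using diff compact_imp_closed[OF K] vanish that by (rule pderiv_eq_0_outside)
  obtain M where M: "\<And>x. \<bar>pderiv i \<phi> x\<bar> \<le> M"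
  proof -
    obtain B where B: "\<And>y. y \<in> pderiv i \<phi> ` K \<Longrightarrow> norm y \<le> B"
      using compact_imp_bounded[OF compact_continuous_image[OF continuous_on_subset[OF cont'] K]]
      unfolding bounded_iff by blast
    have "\<bar>pderiv i \<phi> x\<bar> \<le> max B 0" for x
      using p0[of x] B[of "pderiv i \<phi> x"] by (cases "x \<in> K") auto
    then show thesis by (rule that)
  qed
  have h: "filterlim h (at 0) sequentially" "0 < h n" "h n \<le> 1" for n
    unfolding h_def filterlim_at using LIMSEQ_Suc[OF lim_const_over_n] by auto
  have "norm (axis i 1 :: real^2) \<le> 1" by simp
  from lborel_integral_difference_quotient_tendsto[OF
      has_real_derivative_pderiv_along_axis[OF diff] cont cont' M K vanish this h]
  have lim: "(\<lambda>n. \<integral>x. (\<phi> (x + h n *\<^sub>R axis i 1) - \<phi> x) / h n \<partial>lborel) \<longlonglongrightarrow> (\<integral>x. pderiv i \<phi> x \<partial>lborel)" .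
  have zero: "(\<integral>x. (\<phi> (x + h n *\<^sub>R axis i 1) - \<phi> x) / h n \<partial>lborel) = 0" for n
  proof -
    have \<phi>_int: "integrable lborel \<phi>" by (rule integrable_lborel_compact_support[OF cont K vanish])
    have "(\<integral>x. \<phi> (x + h n *\<^sub>R axis i 1) - \<phi> x \<partial>lborel) = 0"
      using lborel_integral_translate[OF \<phi>_int, of "h n *\<^sub>R axis i 1"] \<phi>_int
      by (simp add: add.commute Bochner_Integration.integral_diff)
    then show ?thesis by simp
  qed
  from lim show ?thesis by (simp only: zero LIMSEQ_const_iff)
qed

lemma integral_lebesgue_on_eq_lborel:
  fixes f :: "'a::euclidean_space \<Rightarrow> real"
  assumes \<Omega>: "\<Omega> \<in> sets lebesgue" and f: "integrable lborel f" and vanish: "\<And>x. x \<notin> \<Omega> \<Longrightarrow> f x = 0"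
  shows "integrable (lebesgue_on \<Omega>) f" and "(\<integral>x. f x \<partial>lebesgue_on \<Omega>) = (\<integral>x. f x \<partial>lborel)"
proof -
  have \<Omega>': "\<Omega> \<inter> space lebesgue \<in> sets lebesgue" using \<Omega> by simp
  have restrict: "(\<lambda>x. indicator \<Omega> x * f x) = f"
  proof
    fix x show "indicator \<Omega> x * f x = f x" using vanish[of x] by (cases "x \<in> \<Omega>") auto
  qed
  have f_meas: "f \<in> borel_measurable lborel" by (rule borel_measurable_integrable[OF f])
  have "integrable lebesgue f" using f integrable_completion[OF f_meas] by simp
  then show "integrable (lebesgue_on \<Omega>) f"
    by (simp add: integrable_restrict_space[OF \<Omega>'] restrict)
  have "(\<integral>x. f x \<partial>lebesgue_on \<Omega>) = (\<integral>x. f x \<partial>lebesgue)"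
    by (simp add: integral_restrict_space[OF \<Omega>'] restrict)
  also have "\<dots> = (\<integral>x. f x \<partial>lborel)" by (rule integral_completion[OF f_meas])
  finally show "(\<integral>x. f x \<partial>lebesgue_on \<Omega>) = (\<integral>x. f x \<partial>lborel)" .
qed

lemma integral_pderiv_test_fun_eq_0:
  assumes "open \<Omega>" "test_fun \<Omega> \<phi>"
  shows "integrable (lebesgue_on \<Omega>) (pderiv i \<phi>)" and "(\<integral>x. pderiv i \<phi> x \<partial>lebesgue_on \<Omega>) = 0"
proof -
  define K where "K = closure {x. \<phi> x \<noteq> 0}"
  have K: "compact K" "K \<subseteq> \<Omega>"
    using assms(2) unfolding test_fun_def compact_support_in_def K_def by simp_all
  have vanish: "\<phi> x = 0" if "x \<notin> K" for x
    using that closure_subset[of "{x. \<phi> x \<noteq> 0}"] unfolding K_def by blast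
  note C1 = test_fun_C1[OF assms(2)]
  have int: "integrable lborel (pderiv i \<phi>)"
    using C1(3) K(1) pderiv_eq_0_outside[OF C1(1) compact_imp_closed[OF K(1)] vanish]
    by (rule integrable_lborel_compact_support)
  have "\<Omega> \<in> sets lebesgue" using assms(1) by (simp add: borel_open sets_completionI_sets)
  moreover have "pderiv i \<phi> x = 0" if "x \<notin> \<Omega>" for x
    using pderiv_eq_0_outside[OF C1(1) compact_imp_closed[OF K(1)] vanish] K(2) that by blast
  ultimately show "integrable (lebesgue_on \<Omega>) (pderiv i \<phi>)"
    and "(\<integral>x. pderiv i \<phi> x \<partial>lebesgue_on \<Omega>) = 0"
    using integral_lebesgue_on_eq_lborel[OF _ int] lborel_integral_pderiv_eq_0[OF C1 K(1) vanish]
    by simp_all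
qed

section \<open>The fundamental lemma of the calculus of variations\<close>

lemma emeasure_density_eq_integral:
  fixes g :: "'a \<Rightarrow> real"
  assumes g: "integrable M g" "\<And>x. 0 \<le> g x" and A: "A \<in> sets M"
  shows "emeasure (density M (\<lambda>x. ennreal (g x))) A = ennreal (\<integral>x. g x * indicator A x \<partial>M)"
proof -
  have [measurable]: "g \<in> borel_measurable M" by (rule borel_measurable_integrable[OF g(1)])
  have "emeasure (density M (\<lambda>x. ennreal (g x))) A = (\<integral>\<^sup>+x. ennreal (g x) * indicator A x \<partial>M)"
    using A by (intro emeasure_density) auto
  also have "\<dots> = (\<integral>\<^sup>+x. ennreal (g x * indicator A x) \<partial>M)"
    by (intro nn_integral_cong) (auto simp: indicator_def)
  also have "\<dots> = ennreal (\<integral>x. g x * indicator A x \<partial>M)"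
    using integrable_real_mult_indicator[OF A g(1)] by (rule nn_integral_eq_integral) (simp add: g(2))
  finally show ?thesis .
qed

text \<open>The positive and negative parts of \<open>w\<close> on the box have densities whose measures agree on
  the Int-stable generator of boxes, hence agree.\<close>

lemma AE_box_eq_0_if_box_integrals_eq_0:
  fixes w :: "'a::euclidean_space \<Rightarrow> real"
  assumes w: "integrable lborel w"
    and zero: "\<And>a b. box a b \<subseteq> box a0 b0 \<Longrightarrow> (\<integral>x. w x * indicator (box a b) x \<partial>lborel) = 0"
  shows "AE x in lborel. x \<in> box a0 b0 \<longrightarrow> w x = 0"
proof -
  define pos where "pos x = max 0 (w x) * indicator (box a0 b0) x" for x
  define neg where "neg x = max 0 (- w x) * indicator (box a0 b0) x" for x
  have pos_int: "integrable lborel pos" and neg_int: "integrable lborel neg"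
    unfolding pos_def neg_def using w
    by (auto intro!: integrable_real_mult_indicator integrable_max integrable_minus)
  let ?P = "density lborel (\<lambda>x. ennreal (pos x))" and ?N = "density lborel (\<lambda>x. ennreal (neg x))"
  have emeasure_pos: "emeasure ?P A = ennreal (\<integral>x. pos x * indicator A x \<partial>lborel)" if "A \<in> sets borel" for A
    using that by (intro emeasure_density_eq_integral pos_int) (auto simp: pos_def)
  have emeasure_neg: "emeasure ?N A = ennreal (\<integral>x. neg x * indicator A x \<partial>lborel)" if "A \<in> sets borel" for A
    using that by (intro emeasure_density_eq_integral neg_int) (auto simp: neg_def)
  let ?E = "range (\<lambda>(a, b). box a b :: 'a set)"
  have "?P = ?N"
  proof (rule measure_eqI_generator_eq[where E="?E" and \<Omega>=UNIV and A="\<lambda>i. box (- (real i *\<^sub>R One)) (real i *\<^sub>R One)"])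
    show "Int_stable ?E" by (auto simp: Int_stable_def box_Int_box)
    show "sets ?P = sigma_sets UNIV ?E" "sets ?N = sigma_sets UNIV ?E"
      by (simp_all add: borel_eq_box)
    show "emeasure ?P (box (- (real i *\<^sub>R One)) (real i *\<^sub>R One)) \<noteq> \<infinity>" for i
      by (simp add: emeasure_pos)
    fix X assume "X \<in> ?E"
    then obtain c d where X: "X = box c d" by auto
    obtain a b where ab: "box a0 b0 \<inter> box c d = box a b"
      unfolding box_Int_box by blast
    have "w x * indicator (box a b) x = pos x * indicator (box c d) x - neg x * indicator (box c d) x" for x
      using ab[symmetric] by (auto simp: pos_def neg_def indicator_def max_def)
    moreover have "(\<integral>x. w x * indicator (box a b) x \<partial>lborel) = 0"
      using ab by (intro zero) blast
    ultimately have "(\<integral>x. pos x * indicator (box c d) x - neg x * indicator (box c d) x \<partial>lborel) = 0"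
      by simp
    then have "(\<integral>x. pos x * indicator (box c d) x \<partial>lborel) = (\<integral>x. neg x * indicator (box c d) x \<partial>lborel)"
      using integrable_real_mult_indicator[OF _ pos_int, of "box c d"]
        integrable_real_mult_indicator[OF _ neg_int, of "box c d"]
      by (simp add: Bochner_Integration.integral_diff)
    then show "emeasure ?P X = emeasure ?N X" unfolding X by (simp add: emeasure_pos emeasure_neg)
  qed (use UN_box_eq_UNIV in auto)
  moreover have "integral\<^sup>N lborel (\<lambda>x. ennreal (pos x)) \<noteq> \<infinity>"
  proof -
    have "integral\<^sup>N lborel (\<lambda>x. ennreal (pos x)) = emeasure ?P UNIV"
      using borel_measurable_integrable[OF pos_int] by (subst emeasure_density) auto
    then show ?thesis using emeasure_pos[of UNIV] by simp
  qed
  ultimately have "AE x in lborel. ennreal (pos x) = ennreal (neg x)"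
    using pos_int neg_int by (subst finite_density_unique[symmetric]) auto
  then show ?thesis
    by eventually_elim (auto simp: pos_def neg_def max_def split: if_splits)
qed

lemma box_integral_eq_0_if_test_integrals_eq_0:
  fixes w :: "real^2 \<Rightarrow> real"
  assumes \<Omega>: "open \<Omega>" and w: "integrable (lebesgue_on \<Omega>) w"
    and zero: "\<And>\<phi>. test_fun \<Omega> \<phi> \<Longrightarrow> (\<integral>x. w x * \<phi> x \<partial>lebesgue_on \<Omega>) = 0"
    and ab: "closure (box a b) \<subseteq> \<Omega>"
  shows "(\<integral>x. w x * indicator (box a b) x \<partial>lebesgue_on \<Omega>) = 0"
proof -
  have \<Omega>_sets: "\<Omega> \<in> sets lebesgue" using \<Omega> by (simp add: borel_open sets_completionI_sets)
  have w_meas: "w \<in> borel_measurable (lebesgue_on \<Omega>)" by (rule borel_measurable_integrable[OF w])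
  have "(\<lambda>n. \<integral>x. w x * box_bump (1 / Suc n) a b x \<partial>lebesgue_on \<Omega>)
      \<longlonglongrightarrow> (\<integral>x. w x * indicator (box a b) x \<partial>lebesgue_on \<Omega>)"
  proof (rule integral_dominated_convergence[where w="\<lambda>x. norm (w x)"])
    show "(\<lambda>x. w x * box_bump (1 / Suc n) a b x) \<in> borel_measurable (lebesgue_on \<Omega>)" for n
      using w_meas continuous_imp_measurable_on_sets_lebesgue[OF
          continuous_on_subset[OF test_fun_C1(2)[OF test_fun_box_bump[OF _ ab]]] \<Omega>_sets]
      by (intro borel_measurable_times) auto
    have "box a b \<in> sets (lebesgue_on \<Omega>)"
      using \<Omega>_sets ab closure_subset[of "box a b"]
      by (subst sets_restrict_space_iff) (auto simp: borel_open sets_completionI_sets)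
    then show "(\<lambda>x. w x * indicator (box a b) x) \<in> borel_measurable (lebesgue_on \<Omega>)"
      using w_meas by (intro borel_measurable_times borel_measurable_indicator)
    show "integrable (lebesgue_on \<Omega>) (\<lambda>x. norm (w x))" using w by (rule integrable_norm)
    show "AE x in lebesgue_on \<Omega>. (\<lambda>n. w x * box_bump (1 / Suc n) a b x) \<longlonglongrightarrow> w x * indicator (box a b) x"
      by (intro AE_I2 tendsto_mult tendsto_const box_bump_tendsto_indicator)
    show "AE x in lebesgue_on \<Omega>. norm (w x * box_bump (1 / Suc n) a b x) \<le> norm (w x)" for n
      using box_bump_nonneg box_bump_le_1[of "1 / Suc n"]
      by (intro AE_I2) (simp add: abs_mult mult_left_le)
  qed
  moreover have "(\<integral>x. w x * box_bump (1 / Suc n) a b x \<partial>lebesgue_on \<Omega>) = 0" for n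
    by (intro zero test_fun_box_bump ab) simp
  ultimately show ?thesis by (simp add: LIMSEQ_const_iff)
qed

lemma lebesgue_on_borel_representative:
  fixes w :: "'a::euclidean_space \<Rightarrow> real"
  assumes \<Omega>: "\<Omega> \<in> sets lebesgue" and w: "integrable (lebesgue_on \<Omega>) w"
  obtains w' where "integrable lborel w'" and "AE x in lebesgue. indicator \<Omega> x * w x = w' x"
    and "\<And>A. A \<in> sets borel \<Longrightarrow>
           (\<integral>x. w' x * indicator A x \<partial>lborel) = (\<integral>x. w x * indicator A x \<partial>lebesgue_on \<Omega>)"
proof -
  have \<Omega>': "\<Omega> \<inter> space lebesgue \<in> sets lebesgue" using \<Omega> by simp
  have W: "integrable lebesgue (\<lambda>x. indicator \<Omega> x * w x)"
    using w \<Omega> by (simp add: integrable_restrict_space)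
  then have "(\<lambda>x. indicator \<Omega> x * w x) \<in> borel_measurable (completion lborel)"
    using borel_measurable_integrable by simp
  then obtain w' where w'_meas: "w' \<in> borel_measurable lborel"
      and eq: "AE x in lborel. indicator \<Omega> x * w x = w' x"
    using completion_ex_borel_measurable_real by blast
  have eq': "AE x in lebesgue. indicator \<Omega> x * w x = w' x" by (rule AE_completion[OF eq])
  have "integrable lebesgue w'"
    using W _ eq' by (rule integrable_cong_AE_imp) (use w'_meas in \<open>auto intro: measurable_completion\<close>)
  then have "integrable lborel w'" using integrable_completion[OF w'_meas] by simp
  moreover have "(\<integral>x. w' x * indicator A x \<partial>lborel) = (\<integral>x. w x * indicator A x \<partial>lebesgue_on \<Omega>)"
    if A: "A \<in> sets borel" for A
  proof -
    have "(\<integral>x. w' x * indicator A x \<partial>lborel) = (\<integral>x. w' x * indicator A x \<partial>lebesgue)"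
      using w'_meas A by (simp add: integral_completion)
    also have "\<dots> = (\<integral>x. indicator \<Omega> x * (w x * indicator A x) \<partial>lebesgue)"
    proof (rule integral_cong_AE)
      have "A \<in> sets lebesgue" using A by (simp add: sets_completionI_sets)
      from borel_measurable_times[OF borel_measurable_integrable[OF W] borel_measurable_indicator[OF this]]
      show "(\<lambda>x. indicator \<Omega> x * (w x * indicator A x)) \<in> borel_measurable lebesgue"
        by (simp add: mult.assoc)
      show "(\<lambda>x. w' x * indicator A x) \<in> borel_measurable lebesgue"
        using w'_meas A by (intro borel_measurable_times measurable_completion) auto
      show "AE x in lebesgue. w' x * indicator A x = indicator \<Omega> x * (w x * indicator A x)"
        using eq' by eventually_elim simp
    qed
    also have "\<dots> = (\<integral>x. w x * indicator A x \<partial>lebesgue_on \<Omega>)"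
      by (simp add: integral_restrict_space[OF \<Omega>'])
    finally show ?thesis .
  qed
  ultimately show thesis using that eq' by blast
qed

lemma open_countable_Union_box_closure:
  fixes \<Omega> :: "'a::euclidean_space set"
  assumes "open \<Omega>"
  obtains F where "countable F" "\<Union>F = \<Omega>" "\<And>B. B \<in> F \<Longrightarrow> \<exists>a b. B = box a b \<and> closure (box a b) \<subseteq> \<Omega>"
proof -
  define F where "F = {box a b | a b. closure (box a b) \<subseteq> \<Omega>}"
  have "\<Union>F = \<Omega>"
  proof
    show "\<Union>F \<subseteq> \<Omega>" unfolding F_def using closure_subset by blast
    show "\<Omega> \<subseteq> \<Union>F"
    proof
      fix x assume "x \<in> \<Omega>"
      then obtain a b where "cbox a b \<subseteq> \<Omega>" "x \<in> box a b" by (metis open_contains_cbox assms)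
      moreover have "closure (box a b) \<subseteq> cbox a b" by (rule closure_minimal[OF box_subset_cbox closed_cbox])
      ultimately show "x \<in> \<Union>F" unfolding F_def by blast
    qed
  qed
  moreover obtain F' where F': "F' \<subseteq> F" "countable F'" "\<Union>F' = \<Union>F"
    by (rule Lindelof[of F]) (auto simp: F_def)
  moreover have "\<exists>a b. B = box a b \<and> closure (box a b) \<subseteq> \<Omega>" if "B \<in> F'" for B
    using that F'(1) unfolding F_def by blast
  ultimately show thesis by (intro that[of F']) simp_all
qed

lemma AE_eq_0_if_test_integrals_eq_0:
  fixes w :: "real^2 \<Rightarrow> real"
  assumes \<Omega>: "open \<Omega>" and w: "integrable (lebesgue_on \<Omega>) w"
    and zero: "\<And>\<phi>. test_fun \<Omega> \<phi> \<Longrightarrow> (\<integral>x. w x * \<phi> x \<partial>lebesgue_on \<Omega>) = 0"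
  shows "AE x in lebesgue_on \<Omega>. w x = 0"
proof -
  have \<Omega>_sets: "\<Omega> \<in> sets lebesgue" using \<Omega> by (simp add: borel_open sets_completionI_sets)
  then have \<Omega>': "\<Omega> \<inter> space lebesgue \<in> sets lebesgue" by simp
  obtain w' where w': "integrable lborel w'" and eq: "AE x in lebesgue. indicator \<Omega> x * w x = w' x"
    and set_integral: "\<And>A. A \<in> sets borel \<Longrightarrow>
           (\<integral>x. w' x * indicator A x \<partial>lborel) = (\<integral>x. w x * indicator A x \<partial>lebesgue_on \<Omega>)"
    using lebesgue_on_borel_representative[OF \<Omega>_sets w] by blast
  have box_zero: "(\<integral>x. w' x * indicator (box a b) x \<partial>lborel) = 0" if "closure (box a b) \<subseteq> \<Omega>" for a b
    using set_integral[of "box a b"] box_integral_eq_0_if_test_integrals_eq_0[OF \<Omega> w zero that]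
    by simp
  obtain F where F: "countable F" "\<Union>F = \<Omega>"
    and boxes: "\<And>B. B \<in> F \<Longrightarrow> \<exists>a b. B = box a b \<and> closure (box a b) \<subseteq> \<Omega>"
    using open_countable_Union_box_closure[OF \<Omega>] by blast
  have "AE x in lborel. \<forall>B\<in>F. x \<in> B \<longrightarrow> w' x = 0"
  proof (subst AE_ball_countable[OF F(1)], intro ballI)
    fix B assume "B \<in> F"
    then obtain a0 b0 where B: "B = box a0 b0" "closure (box a0 b0) \<subseteq> \<Omega>" using boxes by blast
    have "box a b \<subseteq> box a0 b0 \<Longrightarrow> closure (box a b) \<subseteq> \<Omega>" for a b
      using B(2) closure_mono by blast
    then show "AE x in lborel. x \<in> B \<longrightarrow> w' x = 0"
      unfolding B(1) by (intro AE_box_eq_0_if_box_integrals_eq_0 w' box_zero)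
  qed
  then have "AE x in lebesgue. x \<in> \<Omega> \<longrightarrow> w' x = 0"
    using F(2) by (auto intro: AE_completion elim!: eventually_mono)
  with eq have "AE x in lebesgue. x \<in> \<Omega> \<longrightarrow> w x = 0"
    by eventually_elim auto
  then show ?thesis by (subst AE_restrict_space_iff[OF \<Omega>'])
qed

section \<open>Lower bounds on sets of positive measure\<close>

lemma ex_nonnull_set_bounded_below:
  fixes G :: "'a::euclidean_space \<Rightarrow> real"
  assumes \<Omega>: "\<Omega> \<in> sets lebesgue" and G: "G \<in> borel_measurable (lebesgue_on \<Omega>)"
    and pos: "\<not> (AE x in lebesgue_on \<Omega>. G x \<le> 0)"
  shows "\<exists>A Q. A \<in> sets lebesgue \<and> A \<subseteq> \<Omega> \<and> emeasure lebesgue A \<noteq> 0 \<and> Q > 0 \<and>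
           (AE x in lebesgue_on A. G x \<ge> Q)"
proof (rule ccontr)
  assume none: "\<not> ?thesis"
  define A where "A n = {x \<in> \<Omega>. 1 / real (Suc n) \<le> G x}" for n
  have A_sets: "A n \<in> sets lebesgue" for n
  proof -
    have "{x \<in> space (lebesgue_on \<Omega>). 1 / real (Suc n) \<le> G x} \<in> sets (lebesgue_on \<Omega>)"
      using G by measurable
    then show ?thesis using \<Omega> by (simp add: A_def sets_restrict_space_iff)
  qed
  have A_null: "emeasure lebesgue (A n) = 0" for n
  proof (rule ccontr)
    assume "emeasure lebesgue (A n) \<noteq> 0"
    moreover have "A n \<subseteq> \<Omega>" "AE x in lebesgue_on (A n). G x \<ge> 1 / real (Suc n)"
      by (auto simp: A_def)
    ultimately have "\<exists>A Q. A \<in> sets lebesgue \<and> A \<subseteq> \<Omega> \<and> emeasure lebesgue A \<noteq> 0 \<and> Q > 0 \<and>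
           (AE x in lebesgue_on A. G x \<ge> Q)"
      using A_sets[of n] by (intro exI[of _ "A n"] exI[of _ "1 / real (Suc n)"]) simp
    with none show False by contradiction
  qed
  have "AE x in lebesgue. x \<notin> A n" for n
    using A_sets[of n] A_null[of n] by (intro AE_not_in) (simp add: null_sets_def)
  then have "AE x in lebesgue. \<forall>n. x \<notin> A n"
    by (simp add: AE_all_countable)
  then have "AE x in lebesgue. x \<in> \<Omega> \<longrightarrow> G x \<le> 0"
  proof eventually_elim
    case (elim x)
    show ?case
    proof (rule impI, rule ccontr)
      assume "x \<in> \<Omega>" "\<not> G x \<le> 0"
      then obtain n where "inverse (real (Suc n)) < G x" using reals_Archimedean[of "G x"] by auto
      then have "x \<in> A n" using \<open>x \<in> \<Omega>\<close> by (auto simp: A_def inverse_eq_divide)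
      with elim show False by blast
    qed
  qed
  then have "AE x in lebesgue_on \<Omega>. G x \<le> 0"
    using \<Omega> by (simp add: AE_restrict_space_iff)
  with pos show False by blast
qed

section \<open>The constant test function\<close>

lemma integrable_const_lebesgue_on_bounded:
  "bounded \<Omega> \<Longrightarrow> \<Omega> \<in> sets lebesgue \<Longrightarrow> integrable (lebesgue_on \<Omega>) (\<lambda>x. c :: real)"
  by (intro finite_measure.integrable_const finite_measure_lebesgue_on bounded_set_imp_lmeasurable)

lemma integrable_component_if_L2:
  fixes g :: "real^2 \<Rightarrow> real^2"
  assumes "bounded \<Omega>" "\<Omega> \<in> sets lebesgue" "L2 \<Omega> g"
  shows "integrable (lebesgue_on \<Omega>) (\<lambda>x. g x $ i)"
proof (rule Bochner_Integration.integrable_bound)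
  show "integrable (lebesgue_on \<Omega>) (\<lambda>x. 1 + (norm (g x))\<^sup>2)"
    using assms by (intro Bochner_Integration.integrable_add integrable_const_lebesgue_on_bounded)
      (auto simp: L2_def)
  have "g \<in> borel_measurable (lebesgue_on \<Omega>)" using assms(3) by (simp add: L2_def)
  then show "(\<lambda>x. g x $ i) \<in> borel_measurable (lebesgue_on \<Omega>)"
    by (rule measurable_compose[OF _
          borel_measurable_continuous_onI[OF linear_continuous_on[OF bounded_linear_vec_nth]]])
  have "t \<le> 1 + t\<^sup>2" for t :: real
    using zero_le_power2[of "t - 1/2"] by (simp add: power2_eq_square algebra_simps)
  then have "\<bar>g x $ i\<bar> \<le> 1 + (norm (g x))\<^sup>2" for x
    using component_le_norm_cart[of "g x" i] order_trans by blast
  then show "AE x in lebesgue_on \<Omega>. norm (g x $ i) \<le> norm (1 + (norm (g x))\<^sup>2)"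
    by (intro AE_I2) simp
qed

lemma is_weak_grad_const_1: "open \<Omega> \<Longrightarrow> is_weak_grad \<Omega> (\<lambda>x. 1) (\<lambda>x. 0)"
  unfolding is_weak_grad_def using integral_pderiv_test_fun_eq_0 by simp

lemma H1_const_1:
  assumes "open \<Omega>" "bounded \<Omega>"
  shows "H1 \<Omega> (\<lambda>x. 1)"
proof -
  have "\<Omega> \<in> sets lebesgue" using assms(1) by (simp add: borel_open sets_completionI_sets)
  then have "L2 \<Omega> (\<lambda>x. 1::real)"
    unfolding L2_def using integrable_const_lebesgue_on_bounded[OF assms(2)] by simp
  moreover have "L2 \<Omega> (\<lambda>x. 0 :: real^2)" by (simp add: L2_def)
  ultimately show ?thesis unfolding H1_def using is_weak_grad_const_1[OF assms(1)] by blast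
qed

text \<open>\<open>wgrad\<close> is an arbitrary choice among the weak gradients, so it vanishes only almost everywhere.\<close>

lemma wgrad_const_1_AE_eq_0:
  assumes \<Omega>: "open \<Omega>" "bounded \<Omega>"
  shows "AE x in lebesgue_on \<Omega>. wgrad \<Omega> (\<lambda>x. 1) x = 0"
proof -
  define g where "g = wgrad \<Omega> (\<lambda>x. 1)"
  have "\<exists>g. is_weak_grad \<Omega> (\<lambda>x. 1) g \<and> L2 \<Omega> g"
    using H1_const_1[OF \<Omega>] unfolding H1_def by blast
  then have g: "is_weak_grad \<Omega> (\<lambda>x. 1) g" "L2 \<Omega> g"
    unfolding g_def wgrad_def by (metis (mono_tags, lifting) someI_ex)+
  have \<Omega>_sets: "\<Omega> \<in> sets lebesgue" using \<Omega>(1) by (simp add: borel_open sets_completionI_sets)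
  have "AE x in lebesgue_on \<Omega>. g x $ i = 0" for i
  proof (rule AE_eq_0_if_test_integrals_eq_0[OF \<Omega>(1)])
    show "integrable (lebesgue_on \<Omega>) (\<lambda>x. g x $ i)"
      by (rule integrable_component_if_L2[OF \<Omega>(2) \<Omega>_sets g(2)])
    fix \<phi> assume "test_fun \<Omega> \<phi>"
    then show "(\<integral>x. g x $ i * \<phi> x \<partial>lebesgue_on \<Omega>) = 0"
      using g(1) integral_pderiv_test_fun_eq_0[OF \<Omega>(1)] unfolding is_weak_grad_def by fastforce
  qed
  from this[of 1] this[of 2] show ?thesis
    unfolding g_def by eventually_elim (simp add: vec_eq_iff forall_2)
qed

theorem proposition6p7:
  fixes \<Omega> :: "(real^2) set" and k :: real and f u S :: "real^2 \<Rightarrow> real"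
  assumes "bounded_lipschitz_domain \<Omega>"
    and "0 < k" and "k < 1"
    and "L2 \<Omega> f" and "(\<integral>x. f x \<partial>lebesgue_on \<Omega>) \<noteq> 0"
    and "BV01 \<Omega> u"
    and "\<not> (AE x in lebesgue_on \<Omega>. u x = 1)"
    and "H1 \<Omega> S"
    and "\<forall>v. H1 \<Omega> v \<longrightarrow>
           (\<integral>x. coef_a k (u x) * (wgrad \<Omega> S x \<bullet> wgrad \<Omega> v x) \<partial>lebesgue_on \<Omega>)
         + (\<integral>x. coef_b (u x) * (S x)^3 * v x \<partial>lebesgue_on \<Omega>)
         = (\<integral>x. f x * v x \<partial>lebesgue_on \<Omega>)"
  shows "\<exists>\<Omega>s Q. \<Omega>s \<in> sets lebesgue \<and> \<Omega>s \<subseteq> \<Omega> \<and> emeasure lebesgue \<Omega>s \<noteq> 0 \<and> Q > 0 \<and>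
           (AE x in lebesgue_on \<Omega>s. coef_b (u x) * (S x)^2 \<ge> Q)"
proof (rule ex_nonnull_set_bounded_below)
  have \<Omega>: "open \<Omega>" "bounded \<Omega>"
    using assms(1) unfolding bounded_lipschitz_domain_def lipschitz_domain_def by auto
  then show "\<Omega> \<in> sets lebesgue" by (simp add: borel_open sets_completionI_sets)
  have "u \<in> borel_measurable (lebesgue_on \<Omega>)" "S \<in> borel_measurable (lebesgue_on \<Omega>)"
    using assms(6,8) unfolding BV01_def L1_def H1_def L2_def by (auto intro: borel_measurable_integrable)
  then show "(\<lambda>x. coef_b (u x) * (S x)^2) \<in> borel_measurable (lebesgue_on \<Omega>)"
    unfolding coef_b_def by measurable
  show "\<not> (AE x in lebesgue_on \<Omega>. coef_b (u x) * (S x)^2 \<le> 0)"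
  proof
    assume "AE x in lebesgue_on \<Omega>. coef_b (u x) * (S x)^2 \<le> 0"
    moreover have "AE x in lebesgue_on \<Omega>. 0 \<le> u x \<and> u x \<le> 1" using assms(6) by (simp add: BV01_def)
    ultimately have "AE x in lebesgue_on \<Omega>. coef_b (u x) * (S x)^3 * 1 = 0"
      by eventually_elim (auto simp: coef_b_def power2_eq_square power3_eq_cube mult_le_0_iff)
    then have "(\<integral>x. coef_b (u x) * (S x)^3 * 1 \<partial>lebesgue_on \<Omega>) = 0"
      by (rule integral_eq_zero_AE)
    moreover have "(\<integral>x. coef_a k (u x) * (wgrad \<Omega> S x \<bullet> wgrad \<Omega> (\<lambda>x. 1) x) \<partial>lebesgue_on \<Omega>) = 0"
      by (rule integral_eq_zero_AE) (use wgrad_const_1_AE_eq_0[OF \<Omega>] in \<open>eventually_elim, simp\<close>)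
    ultimately have "(\<integral>x. f x * 1 \<partial>lebesgue_on \<Omega>) = 0"
      using assms(9)[rule_format, OF H1_const_1[OF \<Omega>]] by simp
    with assms(5) show False by simp
  qed
qed

end
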